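(* Let $G$ be a graph of order $n\ge 9$. If $\tau(G)\le \frac{n}{2}$, then $\beta_p(G)\le n-3$.
   Context: All graphs are finite, simple, undirected and connected. Two vertices $u,v$ are twins if $N(u)\setminus\{v\}=N(v)\setminus\{u\}$; this is an equivalence relation whose classes are called twin classes, and the twin number $\tau(G)$ is the maximum cardinality of a twin class. For a partition $\Pi=\{S_1,\dots,S_k\}$ of $V(G)$, $r(u|\Pi)=(d(u,S_1),\dots,d(u,S_k))$ with $d(u,S)=\min_{w\in S}d(u,w)$; $\Pi$ is locating if $r(u|\Pi)\ne r(v|\Pi)$ for all distinct $u,v$; $\beta_p(G)$ (partition dimension) is the minimum size of a locating partition. *)

theory Defs
  imports Main
begin

definition simple_graph :: "'a set \<Rightarrow> ('a \<Rightarrow> 'a \<Rightarrow> bool) \<Rightarrow> bool" where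
  "simple_graph V E \<longleftrightarrow> finite V \<and> V \<noteq> {} \<and>
     (\<forall>u v. E u v \<longrightarrow> u \<in> V \<and> v \<in> V) \<and>
     (\<forall>u v. E u v \<longrightarrow> E v u) \<and> (\<forall>u. \<not> E u u)"

definition walk_of_length :: "'a set \<Rightarrow> ('a \<Rightarrow> 'a \<Rightarrow> bool) \<Rightarrow> nat \<Rightarrow> 'a \<Rightarrow> 'a \<Rightarrow> bool" where
  "walk_of_length V E k u v \<longleftrightarrow> (\<exists>xs. length xs = Suc k \<and> set xs \<subseteq> V \<and>
     hd xs = u \<and> last xs = v \<and> (\<forall>i < k. E (xs ! i) (xs ! Suc i)))"

definition connected_graph :: "'a set \<Rightarrow> ('a \<Rightarrow> 'a \<Rightarrow> bool) \<Rightarrow> bool" where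
  "connected_graph V E \<longleftrightarrow> (\<forall>u\<in>V. \<forall>v\<in>V. \<exists>k. walk_of_length V E k u v)"

definition gdist :: "'a set \<Rightarrow> ('a \<Rightarrow> 'a \<Rightarrow> bool) \<Rightarrow> 'a \<Rightarrow> 'a \<Rightarrow> nat" where
  "gdist V E u v = (LEAST k. walk_of_length V E k u v)"

definition set_dist :: "'a set \<Rightarrow> ('a \<Rightarrow> 'a \<Rightarrow> bool) \<Rightarrow> 'a \<Rightarrow> 'a set \<Rightarrow> nat" where
  "set_dist V E u S = Min (gdist V E u ` S)"

definition is_partition :: "'a set \<Rightarrow> 'a set set \<Rightarrow> bool" where
  "is_partition V P \<longleftrightarrow> (\<forall>S\<in>P. S \<noteq> {}) \<and> \<Union>P = V \<and>
     (\<forall>S\<in>P. \<forall>T\<in>P. S \<noteq> T \<longrightarrow> S \<inter> T = {})"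

text \<open>r(u|P) \<noteq> r(v|P) for distinct u, v, i.e. some class separates them by distance.\<close>
definition locating_partition :: "'a set \<Rightarrow> ('a \<Rightarrow> 'a \<Rightarrow> bool) \<Rightarrow> 'a set set \<Rightarrow> bool" where
  "locating_partition V E P \<longleftrightarrow> is_partition V P \<and>
     (\<forall>u\<in>V. \<forall>v\<in>V. u \<noteq> v \<longrightarrow> (\<exists>S\<in>P. set_dist V E u S \<noteq> set_dist V E v S))"

definition partition_dim :: "'a set \<Rightarrow> ('a \<Rightarrow> 'a \<Rightarrow> bool) \<Rightarrow> nat" where
  "partition_dim V E = (LEAST k. \<exists>P. locating_partition V E P \<and> card P = k)"

definition nbhd :: "'a set \<Rightarrow> ('a \<Rightarrow> 'a \<Rightarrow> bool) \<Rightarrow> 'a \<Rightarrow> 'a set" where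
  "nbhd V E u = {w \<in> V. E u w}"

definition twins :: "'a set \<Rightarrow> ('a \<Rightarrow> 'a \<Rightarrow> bool) \<Rightarrow> 'a \<Rightarrow> 'a \<Rightarrow> bool" where
  "twins V E u v \<longleftrightarrow> nbhd V E u - {v} = nbhd V E v - {u}"

definition twin_class :: "'a set \<Rightarrow> ('a \<Rightarrow> 'a \<Rightarrow> bool) \<Rightarrow> 'a \<Rightarrow> 'a set" where
  "twin_class V E u = {v \<in> V. twins V E u v}"

definition twin_number :: "'a set \<Rightarrow> ('a \<Rightarrow> 'a \<Rightarrow> bool) \<Rightarrow> nat" where
  "twin_number V E = Max ((\<lambda>u. card (twin_class V E u)) ` V)"

end

theory Submission
  imports Defs
begin

text \<open>
  Three disjoint pairs \<open>{a\<^sub>i, b\<^sub>i}\<close>, each resolved by a vertex outside the six, give a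
  locating partition into these pairs and \<open>n - 6\<close> singletons, hence \<open>\<beta>\<^sub>p(G) \<le> n - 3\<close>. If some vertex v has no distance layer
  containing all but two of the other vertices, a greedy matching gives three pairs at
  different distances from v. Otherwise every vertex has such a large layer; this forces a
  vertex of degree at least 3 to have at most two non-neighbours, and a vertex of degree at
  most 2 either yields the pairs directly or is pendant at a universal vertex. In the
  remaining configurations the twin bound rules out large sets of twins, and the pairs can
  be chosen together with vertices adjacent to exactly one member of each pair.
\<close>

section \<open>Disjoint pairs with distinct values\<close>

lemma ex_in_diff_if_card_less: "finite X \<Longrightarrow> card X < card A \<Longrightarrow> \<exists>x\<in>A. x \<notin> X"
  by (metis card_mono not_le subsetI)

lemma obtain_three_outside:
  assumes "card X + 3 \<le> card A" "finite X"
  obtains a b c where "a \<in> A - X" "b \<in> A - X" "c \<in> A - X" "distinct [a, b, c]"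
proof -
  have "3 \<le> card (A - X)"
    using assms diff_card_le_card_Diff[OF assms(2), of A] by linarith
  then obtain T where "T \<subseteq> A - X" "card T = 3"
    by (meson obtain_subset_with_card_n)
  then show ?thesis
    using that unfolding card_3_iff by auto
qed

lemma finite_ex_max_image:
  fixes g :: "'a \<Rightarrow> 'b::linorder"
  assumes "finite S" "S \<noteq> {}"
  obtains a where "a \<in> S" "\<And>x. x \<in> S \<Longrightarrow> g x \<le> g a"
proof -
  have "Max (g ` S) \<in> g ` S"
    using assms by simp
  then obtain a where "a \<in> S" "g a = Max (g ` S)"
    by (metis imageE)
  then show ?thesis
    using that assms(1) by simp
qed

definition flat_pairs :: "('a \<times> 'a) list \<Rightarrow> 'a list" where
  "flat_pairs ps = concat (map (\<lambda>(a, b). [a, b]) ps)"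

lemma flat_pairs_Nil [simp]: "flat_pairs [] = []"
  by (simp add: flat_pairs_def)

lemma flat_pairs_Cons [simp]: "flat_pairs ((a, b) # ps) = a # b # flat_pairs ps"
  by (simp add: flat_pairs_def)

lemma length_flat_pairs [simp]: "length (flat_pairs ps) = 2 * length ps"
  by (induction ps) auto

lemma set_flat_pairs: "set (flat_pairs ps) = (\<Union>(a, b)\<in>set ps. {a, b})"
  by (induction ps) auto

lemma distinct_flat_pairs_disjoint:
  assumes "distinct (flat_pairs ps)" "(a, b) \<in> set ps" "(c, d) \<in> set ps" "(a, b) \<noteq> (c, d)"
  shows "{a, b} \<inter> {c, d} = {}"
  using assms by (induction ps) (auto simp: set_flat_pairs)

lemma distinct_flat_pairs_neq:
  "distinct (flat_pairs ps) \<Longrightarrow> (a, b) \<in> set ps \<Longrightarrow> a \<noteq> b"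
  by (induction ps) (auto simp: set_flat_pairs)

lemma distinct_flat_pairs_distinct: "distinct (flat_pairs ps) \<Longrightarrow> distinct ps"
  by (induction ps) (auto simp: set_flat_pairs)

lemma card_fiber_Diff_pair:
  fixes f :: "'a \<Rightarrow> 'b"
  assumes fin: "finite P" and "2 * Suc k \<le> card P"
    and ab: "a \<in> P" "b \<in> P" "f a \<noteq> f b"
    and a_max: "\<And>x. x \<in> P \<Longrightarrow> card {y\<in>P. f y = f x} \<le> card {y\<in>P. f y = f a}"
    and b_max: "\<And>x. x \<in> P \<Longrightarrow> f x \<noteq> f a \<Longrightarrow> card {y\<in>P. f y = f x} \<le> card {y\<in>P. f y = f b}"
    and bound: "\<And>x. x \<in> P \<Longrightarrow> card {y\<in>P. f y = f x} + Suc k \<le> card P"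
    and x: "x \<in> P - {a, b}"
  shows "card {y\<in>P - {a, b}. f y = f x} + k \<le> card (P - {a, b})"
proof -
  let ?F = "\<lambda>z. {y\<in>P. f y = f z}"
  have fin_F: "finite (?F z)" for z
    using fin by simp
  have F_pos: "0 < card (?F z)" if "z \<in> P" for z
    using that fin_F[of z] card_gt_0_iff by blast
  have card_P': "card (P - {a, b}) = card P - 2"
    using ab fin by (cases "a = b") (auto simp: card_Diff_subset)
  consider "f x = f a" | "f x = f b" | "f x \<noteq> f a" "f x \<noteq> f b"
    by blast
  then show ?thesis
  proof cases
    case 1
    then have "{y\<in>P - {a, b}. f y = f x} = ?F a - {a}"
      using ab by auto
    then show ?thesis
      using bound[OF ab(1)] card_P' F_pos[OF ab(1)] ab(1) fin_F[of a] by simp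
  next
    case 2
    then have "{y\<in>P - {a, b}. f y = f x} = ?F b - {b}"
      using ab by auto
    then show ?thesis
      using bound[OF ab(2)] card_P' F_pos[OF ab(2)] ab(2) fin_F[of b] by simp
  next
    case 3
    \<comment> \<open>the fibers of x, b, a are disjoint and increase in size\<close>
    then have "{y\<in>P - {a, b}. f y = f x} = ?F x"
      by auto
    moreover have "card (?F x) + card (?F a) + card (?F b) \<le> card P"
    proof -
      have "?F x \<inter> ?F a = {}" "(?F x \<union> ?F a) \<inter> ?F b = {}"
        using 3 ab(3) by auto
      then have "card (?F x \<union> ?F a \<union> ?F b) = card (?F x) + card (?F a) + card (?F b)"
        using fin_F by (simp add: card_Un_disjoint)
      moreover have "card (?F x \<union> ?F a \<union> ?F b) \<le> card P"
        using fin by (intro card_mono) auto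
      ultimately show ?thesis by simp
    qed
    moreover have "card (?F x) \<le> card (?F b)" "card (?F b) \<le> card (?F a)"
      using a_max[OF ab(2)] b_max 3 x by auto
    ultimately show ?thesis
      using card_P' \<open>2 * Suc k \<le> card P\<close> by simp
  qed
qed

lemma disjoint_pairs_with_distinct_values:
  fixes f :: "'a \<Rightarrow> 'b"
  assumes "finite P" "2 * k \<le> card P" "\<And>x. x \<in> P \<Longrightarrow> card {y\<in>P. f y = f x} + k \<le> card P"
  shows "\<exists>ps. length ps = k \<and> distinct (flat_pairs ps) \<and> set (flat_pairs ps) \<subseteq> P \<and>
    (\<forall>(a, b)\<in>set ps. f a \<noteq> f b)"
  using assms
proof (induction k arbitrary: P)
  case 0
  show ?case by (intro exI[of _ "[]"]) simp
next
  case (Suc k)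
  let ?F = "\<lambda>z. {y\<in>P. f y = f z}"
  have "P \<noteq> {}" using Suc.prems(2) by auto
  \<comment> \<open>greedily pair a vertex of a largest fiber with one of a largest other fiber\<close>
  then obtain a where a: "a \<in> P" "\<And>x. x \<in> P \<Longrightarrow> card (?F x) \<le> card (?F a)"
    using finite_ex_max_image[OF Suc.prems(1), where g = "\<lambda>z. card (?F z)"] by blast
  let ?Q = "{x\<in>P. f x \<noteq> f a}"
  have "?F a \<noteq> P"
    using Suc.prems(3)[OF a(1)] by auto
  then have "?Q \<noteq> {}"
    by auto
  then obtain b where b: "b \<in> ?Q" "\<And>x. x \<in> ?Q \<Longrightarrow> card (?F x) \<le> card (?F b)"
    using finite_ex_max_image[of ?Q "\<lambda>z. card (?F z)"] Suc.prems(1) by auto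
  let ?P' = "P - {a, b}"
  have "2 * k \<le> card ?P'"
    using Suc.prems(1,2) a(1) b(1) by (cases "a = b") (auto simp: card_Diff_subset)
  moreover have "card {y\<in>?P'. f y = f x} + k \<le> card ?P'" if "x \<in> ?P'" for x
    using card_fiber_Diff_pair[where f = f and P = P and k = k and a = a and b = b and x = x]
      Suc.prems(1,2,3) a b that by auto
  ultimately obtain ps where ps: "length ps = k" "distinct (flat_pairs ps)" "set (flat_pairs ps) \<subseteq> ?P'"
    "\<forall>(a, b)\<in>set ps. f a \<noteq> f b"
    using Suc.IH[of ?P'] Suc.prems(1) by auto
  then show ?case
    using a(1) b(1) by (intro exI[of _ "(a, b) # ps"]) auto
qed

section \<open>Distances in a connected graph\<close>

locale connected_simple_graph =
  fixes V :: "'a set" and E :: "'a \<Rightarrow> 'a \<Rightarrow> bool"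
  assumes simple: "simple_graph V E" and connected: "connected_graph V E"
begin

lemma finite_V: "finite V"
  using simple by (simp add: simple_graph_def)

lemma adj_in_V:
  assumes "E u v"
  shows "u \<in> V" "v \<in> V"
  using simple assms by (simp_all add: simple_graph_def)

lemma adj_sym: "E u v \<Longrightarrow> E v u"
  using simple by (simp add: simple_graph_def)

lemma not_adj_self: "\<not> E u u"
  using simple by (simp add: simple_graph_def)

lemma walk_of_length_0_iff: "walk_of_length V E 0 u v \<longleftrightarrow> u \<in> V \<and> u = v"
proof
  assume "walk_of_length V E 0 u v"
  then obtain xs where "length xs = 1" "set xs \<subseteq> V" "hd xs = u" "last xs = v"
    unfolding walk_of_length_def by auto
  then show "u \<in> V \<and> u = v"
    by (cases xs) auto
next
  assume "u \<in> V \<and> u = v"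
  then show "walk_of_length V E 0 u v"
    unfolding walk_of_length_def by (intro exI[of _ "[u]"]) auto
qed

lemma walk_of_length_Cons:
  assumes "E b u" "walk_of_length V E j u v"
  shows "walk_of_length V E (Suc j) b v"
proof -
  obtain xs where xs: "length xs = Suc j" "set xs \<subseteq> V" "hd xs = u" "last xs = v"
    "\<forall>i<j. E (xs ! i) (xs ! Suc i)"
    using assms(2) unfolding walk_of_length_def by auto
  have "xs \<noteq> []" using xs(1) by auto
  have "E ((b # xs) ! i) ((b # xs) ! Suc i)" if "i < Suc j" for i
    using that assms(1) xs(3,5) \<open>xs \<noteq> []\<close> by (cases i) (auto simp: hd_conv_nth)
  then show ?thesis
    unfolding walk_of_length_def using xs \<open>xs \<noteq> []\<close> adj_in_V(1)[OF assms(1)]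
    by (intro exI[of _ "b # xs"]) auto
qed

lemma walk_of_length_SucE:
  assumes "walk_of_length V E (Suc j) b v"
  obtains u where "E b u" "walk_of_length V E j u v"
proof -
  obtain xs where xs: "length xs = Suc (Suc j)" "set xs \<subseteq> V" "hd xs = b" "last xs = v"
    "\<forall>i<Suc j. E (xs ! i) (xs ! Suc i)"
    using assms unfolding walk_of_length_def by auto
  then obtain ys where xy: "xs = b # ys" "length ys = Suc j"
    by (cases xs) auto
  then have "ys \<noteq> []" by auto
  have "E b (hd ys)"
    using xs(5)[rule_format, of 0] xy \<open>ys \<noteq> []\<close> by (simp add: hd_conv_nth)
  moreover have "E (ys ! i) (ys ! Suc i)" if "i < j" for i
    using xs(5)[rule_format, of "Suc i"] xy that by simp
  then have "walk_of_length V E j (hd ys) v"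
    unfolding walk_of_length_def using xs xy \<open>ys \<noteq> []\<close>
    by (intro exI[of _ ys]) auto
  ultimately show ?thesis by (rule that)
qed

lemma walk_of_length_1_iff: "walk_of_length V E 1 u v \<longleftrightarrow> E u v"
proof
  assume "walk_of_length V E 1 u v"
  then obtain w where "E u w" "walk_of_length V E 0 w v"
    using walk_of_length_SucE[of 0 u v] by auto
  then show "E u v" using walk_of_length_0_iff by auto
next
  assume "E u v"
  then show "walk_of_length V E 1 u v"
    using walk_of_length_Cons[of u v 0 v] walk_of_length_0_iff adj_in_V by auto
qed

lemma gdist_walk: "u \<in> V \<Longrightarrow> v \<in> V \<Longrightarrow> walk_of_length V E (gdist V E u v) u v"
  unfolding gdist_def by (rule LeastI_ex) (use connected in \<open>auto simp: connected_graph_def\<close>)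

lemma gdist_le: "walk_of_length V E k u v \<Longrightarrow> gdist V E u v \<le> k"
  unfolding gdist_def by (rule Least_le)

lemma gdist_self: "u \<in> V \<Longrightarrow> gdist V E u u = 0"
  using gdist_le[of 0 u u] walk_of_length_0_iff by auto

lemma gdist_eq_0_iff: "u \<in> V \<Longrightarrow> v \<in> V \<Longrightarrow> gdist V E u v = 0 \<longleftrightarrow> u = v"
  using gdist_walk[of u v] walk_of_length_0_iff gdist_self by fastforce

lemma gdist_eq_1_iff:
  assumes "u \<in> V" "v \<in> V"
  shows "gdist V E u v = 1 \<longleftrightarrow> E u v"
proof
  assume "gdist V E u v = 1"
  then show "E u v" using gdist_walk[OF assms] walk_of_length_1_iff by simp
next
  assume "E u v"
  then have "gdist V E u v \<le> 1"
    using walk_of_length_1_iff by (intro gdist_le) simp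
  moreover have "gdist V E u v \<noteq> 0"
    using \<open>E u v\<close> gdist_eq_0_iff[OF assms] not_adj_self by auto
  ultimately show "gdist V E u v = 1" by linarith
qed

lemma gdist_SucE:
  assumes "u \<in> V" "v \<in> V" "gdist V E u v = Suc j"
  obtains w where "E u w" "gdist V E w v = j"
proof -
  have "walk_of_length V E (Suc j) u v"
    using gdist_walk[OF assms(1,2)] assms(3) by simp
  then obtain w where w: "E u w" "walk_of_length V E j w v"
    by (rule walk_of_length_SucE)
  have "walk_of_length V E (Suc (gdist V E w v)) u v"
    using walk_of_length_Cons[OF w(1) gdist_walk] adj_in_V(2)[OF w(1)] assms(2) by blast
  then have "j \<le> gdist V E w v"
    using gdist_le[of "Suc (gdist V E w v)" u v] assms(3) by simp
  with gdist_le[OF w(2)] have "gdist V E w v = j" by simp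
  with w(1) show ?thesis by (rule that)
qed

lemma mem_nbhd_iff: "w \<in> nbhd V E u \<longleftrightarrow> E u w"
  unfolding nbhd_def using adj_in_V by auto

lemma finite_nbhd: "finite (nbhd V E u)"
  using finite_V unfolding nbhd_def by simp

lemma nbhd_nonempty:
  assumes "v \<in> V" "V \<noteq> {v}"
  shows "nbhd V E v \<noteq> {}"
proof -
  obtain u where u: "u \<in> V" "u \<noteq> v" using assms by blast
  then obtain k where "gdist V E v u = Suc k"
    using gdist_eq_0_iff[OF assms(1) u(1)] u(2) not0_implies_Suc by metis
  then obtain w where "E v w" by (rule gdist_SucE[OF assms(1) u(1)])
  then show ?thesis by (metis empty_iff mem_nbhd_iff)
qed

definition non_nbhd :: "'a \<Rightarrow> 'a set" where
  "non_nbhd u = {w \<in> V. w \<noteq> u \<and> \<not> E u w}"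

lemma mem_non_nbhd_iff: "w \<in> non_nbhd u \<longleftrightarrow> w \<in> V \<and> w \<noteq> u \<and> \<not> E u w"
  unfolding non_nbhd_def by auto

lemma non_nbhd_subset: "non_nbhd u \<subseteq> V"
  unfolding non_nbhd_def by auto

lemma finite_non_nbhd: "finite (non_nbhd u)"
  using finite_V unfolding non_nbhd_def by simp

lemma non_nbhd_sym: "u \<in> V \<Longrightarrow> w \<in> non_nbhd u \<Longrightarrow> u \<in> non_nbhd w"
  unfolding non_nbhd_def using adj_sym by auto

lemma adj_if_not_in_non_nbhd: "w \<in> V \<Longrightarrow> w \<noteq> u \<Longrightarrow> w \<notin> non_nbhd u \<Longrightarrow> E u w"
  unfolding non_nbhd_def by auto

section \<open>Locating partitions from resolved pairs\<close>

definition resolved_outside :: "'a set \<Rightarrow> 'a \<Rightarrow> 'a \<Rightarrow> bool" where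
  "resolved_outside U a b \<longleftrightarrow> (\<exists>w\<in>V - U. gdist V E a w \<noteq> gdist V E b w)"

lemma resolved_outside_sym: "resolved_outside U a b \<Longrightarrow> resolved_outside U b a"
  unfolding resolved_outside_def by metis

lemma resolved_outside_if_adj_differs:
  assumes "w \<in> V - U" "a \<in> V" "b \<in> V" "E w a \<noteq> E w b"
  shows "resolved_outside U a b"
proof -
  have "gdist V E a w = 1 \<longleftrightarrow> E w a" "gdist V E b w = 1 \<longleftrightarrow> E w b"
    using assms(1-3) gdist_eq_1_iff adj_sym by blast+
  then show ?thesis
    unfolding resolved_outside_def using assms(1,4) by metis
qed

definition resolved_pairs :: "('a \<times> 'a) list \<Rightarrow> bool" where
  "resolved_pairs ps \<longleftrightarrow> distinct (flat_pairs ps) \<and> set (flat_pairs ps) \<subseteq> V \<and>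
     (\<forall>(a, b)\<in>set ps. resolved_outside (set (flat_pairs ps)) a b)"

definition pair_partition :: "('a \<times> 'a) list \<Rightarrow> 'a set set" where
  "pair_partition ps = (\<lambda>(a, b). {a, b}) ` set ps \<union> (\<lambda>x. {x}) ` (V - set (flat_pairs ps))"

lemma is_partition_pair_partition:
  assumes "distinct (flat_pairs ps)" "set (flat_pairs ps) \<subseteq> V"
  shows "is_partition V (pair_partition ps)"
proof -
  have "\<Union>(pair_partition ps) = V"
    using assms(2) unfolding pair_partition_def set_flat_pairs by auto
  moreover have "S \<inter> T = {}"
    if ST: "S \<in> pair_partition ps" "T \<in> pair_partition ps" "S \<noteq> T" for S T
  proof (rule ccontr)
    let ?U = "set (flat_pairs ps)"
    have classes: "(\<exists>a b. (a, b) \<in> set ps \<and> C = {a, b} \<and> x \<in> ?U) \<or> (C = {x} \<and> x \<notin> ?U)"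
      if "C \<in> pair_partition ps" "x \<in> C" for C x
      using that unfolding pair_partition_def set_flat_pairs by auto
    assume "S \<inter> T \<noteq> {}"
    then obtain x where "x \<in> S" "x \<in> T" by blast
    show False
    proof (cases "x \<in> ?U")
      case True
      then obtain a b c d where "(a, b) \<in> set ps" "S = {a, b}" "(c, d) \<in> set ps" "T = {c, d}"
        using classes ST(1,2) \<open>x \<in> S\<close> \<open>x \<in> T\<close> by metis
      then show False
        using distinct_flat_pairs_disjoint[OF assms(1)] \<open>x \<in> S\<close> \<open>x \<in> T\<close> ST(3) by blast
    next
      case False
      then show False
        using classes ST \<open>x \<in> S\<close> \<open>x \<in> T\<close> by metis
    qed
  qed
  ultimately show ?thesis
    unfolding is_partition_def pair_partition_def by auto
qed

lemma card_pair_partition: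
  assumes "distinct (flat_pairs ps)" "set (flat_pairs ps) \<subseteq> V"
  shows "card (pair_partition ps) = card V - length ps"
proof -
  let ?U = "set (flat_pairs ps)"
  have "inj_on (\<lambda>(a, b). {a, b}) (set ps)"
  proof (rule inj_onI, clarify)
    fix a b c d assume ab: "(a, b) \<in> set ps" and cd: "(c, d) \<in> set ps" and "{a, b} = {c, d}"
    show "a = c \<and> b = d"
    proof (rule ccontr)
      assume "\<not> (a = c \<and> b = d)"
      then have "{a, b} \<inter> {c, d} = {}"
        using distinct_flat_pairs_disjoint[OF assms(1) ab cd] by simp
      with \<open>{a, b} = {c, d}\<close> show False by simp
    qed
  qed
  then have "card ((\<lambda>(a, b). {a, b}) ` set ps) = length ps"
    using distinct_flat_pairs_distinct[OF assms(1)] by (simp add: card_image distinct_card)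
  moreover have "card ((\<lambda>x. {x}) ` (V - ?U)) = card V - 2 * length ps"
    using assms distinct_card[OF assms(1)] finite_V
    by (simp add: card_image card_Diff_subset)
  moreover have "{a, b} \<noteq> {x}" if "(a, b) \<in> set ps" for a b x
    using distinct_flat_pairs_neq[OF assms(1) that] by blast
  then have "(\<lambda>(a, b). {a, b}) ` set ps \<inter> (\<lambda>x. {x}) ` (V - ?U) = {}"
    by fastforce
  moreover have "2 * length ps \<le> card V"
    using card_mono[OF finite_V assms(2)] distinct_card[OF assms(1)] by simp
  ultimately show ?thesis
    unfolding pair_partition_def using finite_V by (simp add: card_Un_disjoint)
qed

lemma set_dist_singleton: "set_dist V E u {w} = gdist V E u w"
  by (simp add: set_dist_def)

lemma set_dist_eq_0_iff:
  assumes "finite S" "S \<noteq> {}" "S \<subseteq> V" "u \<in> V"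
  shows "set_dist V E u S = 0 \<longleftrightarrow> u \<in> S"
proof
  assume "set_dist V E u S = 0"
  moreover have "set_dist V E u S \<in> gdist V E u ` S"
    unfolding set_dist_def using assms(1,2) by simp
  ultimately obtain s where "s \<in> S" "gdist V E u s = 0"
    by (metis imageE)
  then show "u \<in> S"
    using gdist_eq_0_iff assms(3,4) by blast
next
  assume "u \<in> S"
  then have "set_dist V E u S \<le> gdist V E u u"
    unfolding set_dist_def using assms(1) by simp
  then show "set_dist V E u S = 0"
    using gdist_self[OF assms(4)] by simp
qed

lemma locating_pair_partition:
  assumes "resolved_pairs ps"
  shows "locating_partition V E (pair_partition ps)"
proof -
  let ?U = "set (flat_pairs ps)"
  have dist: "distinct (flat_pairs ps)" and UV: "?U \<subseteq> V"
    using assms unfolding resolved_pairs_def by auto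
  have part: "is_partition V (pair_partition ps)"
    by (rule is_partition_pair_partition[OF dist UV])
  have partition_class: "finite T \<and> T \<noteq> {} \<and> T \<subseteq> V" if "T \<in> pair_partition ps" for T
    using that UV unfolding pair_partition_def set_flat_pairs by auto
  have "\<exists>T\<in>pair_partition ps. set_dist V E u T \<noteq> set_dist V E v T"
    if uv: "u \<in> V" "v \<in> V" "u \<noteq> v" for u v
  proof -
    obtain T where T: "T \<in> pair_partition ps" "u \<in> T"
      using part uv(1) unfolding is_partition_def by blast
    show ?thesis
    proof (cases "v \<in> T")
      case False
      have "set_dist V E u T = 0" "set_dist V E v T \<noteq> 0"
        using set_dist_eq_0_iff partition_class[OF T(1)] uv T(2) False by blast+
      then show ?thesis
        using T(1) by metis
    next
      case True
      \<comment> \<open>u and v form one of the pairs; the vertex resolving it is a singleton class\<close>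
      then obtain a b where ab: "(a, b) \<in> set ps" "{u, v} = {a, b}"
        using T uv(3) unfolding pair_partition_def by auto
      have "resolved_outside ?U u v"
        using assms ab resolved_outside_sym unfolding resolved_pairs_def doubleton_eq_iff by auto
      then obtain w where "w \<in> V - ?U" "gdist V E u w \<noteq> gdist V E v w"
        unfolding resolved_outside_def by blast
      moreover have "{w} \<in> pair_partition ps"
        using \<open>w \<in> V - ?U\<close> unfolding pair_partition_def by blast
      ultimately show ?thesis
        by (intro bexI[of _ "{w}"]) (simp_all add: set_dist_singleton)
    qed
  qed
  with part show ?thesis
    unfolding locating_partition_def by blast
qed

lemma partition_dim_le_resolved_pairs:
  assumes "resolved_pairs ps"
  shows "partition_dim V E \<le> card V - length ps"
proof -
  have "partition_dim V E \<le> card (pair_partition ps)"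
    unfolding partition_dim_def using locating_pair_partition[OF assms] by (intro Least_le) blast
  then show ?thesis
    using assms card_pair_partition unfolding resolved_pairs_def by simp
qed

lemma resolved_pairs_from_distinct_values:
  fixes f :: "'a \<Rightarrow> 'b"
  assumes "P \<subseteq> V" "2 * k \<le> card P" "\<And>x. x \<in> P \<Longrightarrow> card {y\<in>P. f y = f x} + k \<le> card P"
    and resolve: "\<And>U a b. U \<subseteq> P \<Longrightarrow> card U = 2 * k \<Longrightarrow> a \<in> U \<Longrightarrow> b \<in> U \<Longrightarrow> f a \<noteq> f b \<Longrightarrow>
      resolved_outside U a b"
  shows "\<exists>ps. length ps = k \<and> resolved_pairs ps"
proof -
  obtain ps where ps: "length ps = k" "distinct (flat_pairs ps)" "set (flat_pairs ps) \<subseteq> P"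
    "\<forall>(a, b)\<in>set ps. f a \<noteq> f b"
    using disjoint_pairs_with_distinct_values[of P k f] assms(2,3) finite_subset[OF assms(1) finite_V]
    by blast
  have "card (set (flat_pairs ps)) = 2 * k"
    using distinct_card[OF ps(2)] ps(1) by simp
  moreover have "a \<in> set (flat_pairs ps)" "b \<in> set (flat_pairs ps)" "f a \<noteq> f b"
    if "(a, b) \<in> set ps" for a b
    using that ps(4) unfolding set_flat_pairs by auto
  ultimately have "resolved_outside (set (flat_pairs ps)) a b" if "(a, b) \<in> set ps" for a b
    using resolve[OF ps(3)] that by blast
  then show ?thesis
    using ps assms(1) unfolding resolved_pairs_def by (intro exI[of _ ps]) auto
qed

definition has_three_resolved_pairs :: bool where
  "has_three_resolved_pairs \<longleftrightarrow> (\<exists>ps. length ps = 3 \<and> resolved_pairs ps)"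

lemma has_three_resolved_pairsI:
  assumes "distinct [a1, b1, a2, b2, a3, b3]" "{a1, b1, a2, b2, a3, b3} \<subseteq> V"
    "resolved_outside {a1, b1, a2, b2, a3, b3} a1 b1"
    "resolved_outside {a1, b1, a2, b2, a3, b3} a2 b2"
    "resolved_outside {a1, b1, a2, b2, a3, b3} a3 b3"
  shows has_three_resolved_pairs
  unfolding has_three_resolved_pairs_def resolved_pairs_def
  by (rule exI[of _ "[(a1, b1), (a2, b2), (a3, b3)]"]) (use assms in auto)

lemma has_three_resolved_pairs_by_adjacency:
  assumes "distinct [a1, b1, a2, b2, a3, b3]" "{a1, b1, a2, b2, a3, b3} \<subseteq> V"
    and "w1 \<in> V - {a1, b1, a2, b2, a3, b3}" "E w1 a1" "\<not> E w1 b1"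
    and "w2 \<in> V - {a1, b1, a2, b2, a3, b3}" "E w2 a2" "\<not> E w2 b2"
    and "w3 \<in> V - {a1, b1, a2, b2, a3, b3}" "E w3 a3" "\<not> E w3 b3"
  shows has_three_resolved_pairs
proof (rule has_three_resolved_pairsI[OF assms(1,2)])
  show "resolved_outside {a1, b1, a2, b2, a3, b3} a1 b1"
    using assms by (intro resolved_outside_if_adj_differs[of w1]) auto
  show "resolved_outside {a1, b1, a2, b2, a3, b3} a2 b2"
    using assms by (intro resolved_outside_if_adj_differs[of w2]) auto
  show "resolved_outside {a1, b1, a2, b2, a3, b3} a3 b3"
    using assms by (intro resolved_outside_if_adj_differs[of w3]) auto
qed

section \<open>Distance layers and twins\<close>

lemma nbhd_eq_Diff_non_nbhd: "u \<in> V \<Longrightarrow> nbhd V E u = V - insert u (non_nbhd u)"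
  unfolding nbhd_def non_nbhd_def using not_adj_self by auto

lemma clique_or_independent:
  assumes "\<And>a b z. a \<in> B \<Longrightarrow> b \<in> B \<Longrightarrow> z \<in> B \<Longrightarrow> a \<noteq> b \<Longrightarrow> a \<noteq> z \<Longrightarrow> b \<noteq> z \<Longrightarrow>
    E z a \<Longrightarrow> E z b"
  shows "(\<forall>c\<in>B. \<forall>d\<in>B. c \<noteq> d \<longrightarrow> E c d) \<or> (\<forall>c\<in>B. \<forall>d\<in>B. \<not> E c d)"
proof (cases "\<exists>a\<in>B. \<exists>b\<in>B. E a b")
  case True
  then obtain a b where ab: "a \<in> B" "b \<in> B" "E a b" by blast
  then have "a \<noteq> b" using not_adj_self by blast
  have a_adj: "E a x" if "x \<in> B" "x \<noteq> a" for x
    using assms[of b x a] ab that \<open>a \<noteq> b\<close> by (cases "x = b") auto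
  have "E c d" if "c \<in> B" "d \<in> B" "c \<noteq> d" for c d
  proof (cases "c = a \<or> d = a")
    case True
    then show ?thesis using a_adj that adj_sym by blast
  next
    case False
    then show ?thesis
      using assms[of a d c] a_adj[of c] adj_sym ab(1) that by blast
  qed
  then show ?thesis by blast
qed simp

definition layer :: "'a \<Rightarrow> nat \<Rightarrow> 'a set" where
  "layer v j = {y\<in>V - {v}. gdist V E y v = j}"

lemma layer_subset: "layer v j \<subseteq> V - {v}"
  unfolding layer_def by auto

lemma layer_0: "v \<in> V \<Longrightarrow> layer v 0 = {}"
  unfolding layer_def using gdist_eq_0_iff by auto

lemma layer_1:
  assumes "v \<in> V"
  shows "layer v 1 = nbhd V E v"
proof -
  have "gdist V E y v = 1 \<longleftrightarrow> E v y" if "y \<in> V" for y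
    using gdist_eq_1_iff[OF that assms] adj_sym by blast
  then show ?thesis
    unfolding layer_def nbhd_def using not_adj_self by auto
qed

lemma adj_layer_iff: "v \<in> V \<Longrightarrow> b \<in> layer v j \<Longrightarrow> E v b \<longleftrightarrow> j = 1"
  using layer_1 mem_nbhd_iff unfolding layer_def by auto

lemma card_outside_layer:
  assumes "v \<in> V"
  shows "card (V - insert v (layer v j)) = card V - 1 - card (layer v j)"
proof -
  have "V - insert v (layer v j) = (V - {v}) - layer v j"
    by auto
  moreover have "finite (layer v j)"
    using finite_subset[OF layer_subset] finite_V by blast
  ultimately show ?thesis
    using layer_subset[of v j] assms finite_V by (simp add: card_Diff_subset)
qed

lemma nbhd_subset_outside_layer:
  assumes "v \<in> V" "j \<noteq> 1"
  shows "nbhd V E v \<subseteq> V - insert v (layer v j)"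
proof
  fix w assume "w \<in> nbhd V E v"
  then have "E v w" "w \<in> V" "w \<noteq> v"
    using mem_nbhd_iff adj_in_V not_adj_self by auto
  then show "w \<in> V - insert v (layer v j)"
    using adj_layer_iff[OF assms(1)] assms(2) by blast
qed

end

locale twin_bounded_graph = connected_simple_graph +
  assumes nine_le_card: "9 \<le> card V" and twin_bound: "2 * twin_number V E \<le> card V"
begin

lemma card_twin_set_le:
  assumes "S \<subseteq> V" "u \<in> S" "\<And>y. y \<in> S \<Longrightarrow> nbhd V E u - {y} = nbhd V E y - {u}"
  shows "2 * card S \<le> card V"
proof -
  have "S \<subseteq> twin_class V E u"
    unfolding twin_class_def twins_def using assms by auto
  moreover have "finite (twin_class V E u)"
    unfolding twin_class_def using finite_V by simp
  ultimately have "card S \<le> card (twin_class V E u)"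
    by (rule card_mono[rotated])
  also have "\<dots> \<le> twin_number V E"
    unfolding twin_number_def using assms(1,2) finite_V by (intro Max_ge) auto
  finally show ?thesis
    using twin_bound by simp
qed

lemma card_same_nbhd_le:
  assumes "S \<subseteq> V" "\<And>y. y \<in> S \<Longrightarrow> nbhd V E y = A"
  shows "2 * card S \<le> card V"
proof (cases "S = {}")
  case False
  then obtain u where "u \<in> S" by blast
  have "y \<notin> A" if "y \<in> S" for y
    using assms(2)[OF that] mem_nbhd_iff not_adj_self by blast
  then show ?thesis
    using card_twin_set_le[OF assms(1) \<open>u \<in> S\<close>] assms(2) \<open>u \<in> S\<close> by simp
qed simp

lemma card_same_non_nbhd_le:
  assumes "S \<subseteq> V" "\<And>y. y \<in> S \<Longrightarrow> non_nbhd y = A"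
  shows "2 * card S \<le> card V"
proof (cases "S = {}")
  case False
  then obtain u where "u \<in> S" by blast
  have "y \<notin> A" if "y \<in> S" for y
    using assms(2)[OF that] mem_non_nbhd_iff by blast
  moreover have "nbhd V E x = V - insert x A" if "x \<in> S" for x
    using nbhd_eq_Diff_non_nbhd assms that by blast
  ultimately have "nbhd V E u - {y} = nbhd V E y - {u}" if "y \<in> S" for y
    using \<open>u \<in> S\<close> that by auto
  then show ?thesis
    using card_twin_set_le[OF assms(1) \<open>u \<in> S\<close>] by simp
qed simp

text \<open>A vertex has a large layer if, for some distance j, all but at most two of the
  remaining vertices are at distance j from it.\<close>

definition has_large_layer :: "'a \<Rightarrow> bool" where
  "has_large_layer v \<longleftrightarrow> (\<exists>j. card V < card (layer v j) + 4)"

lemma has_three_resolved_pairs_if_no_large_layer: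
  assumes "v \<in> V" "\<not> has_large_layer v"
  shows has_three_resolved_pairs
proof -
  let ?P = "V - {v}"
  have card_P: "card ?P = card V - 1"
    using assms(1) finite_V by simp
  have "\<exists>ps. length ps = 3 \<and> resolved_pairs ps"
  proof (rule resolved_pairs_from_distinct_values[where f = "\<lambda>y. gdist V E y v"])
    show "?P \<subseteq> V" "2 * 3 \<le> card ?P"
      using card_P nine_le_card by auto
    show "card {y\<in>?P. gdist V E y v = gdist V E x v} + 3 \<le> card ?P" for x
    proof -
      have "card (layer v (gdist V E x v)) + 4 \<le> card V"
        using assms(2) unfolding has_large_layer_def by (simp add: not_less)
      then show ?thesis
        using card_P unfolding layer_def by simp
    qed
    show "resolved_outside U a b"
      if "U \<subseteq> ?P" "a \<in> U" "b \<in> U" "gdist V E a v \<noteq> gdist V E b v" for U a b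
      using that assms(1) unfolding resolved_outside_def by blast
  qed
  then show ?thesis
    unfolding has_three_resolved_pairs_def .
qed

lemma large_layerE:
  assumes "v \<in> V" "has_large_layer v"
  obtains j where "1 \<le> j" "card (V - insert v (layer v j)) \<le> 2"
proof -
  obtain j where j: "card V < card (layer v j) + 4"
    using assms(2) unfolding has_large_layer_def by blast
  then have "j \<noteq> 0"
    using layer_0[OF assms(1)] nine_le_card by (intro notI) simp
  with that[of j] j card_outside_layer[OF assms(1)] show ?thesis
    by simp
qed

lemma card_non_nbhd_le_2_if_large_layer:
  assumes "v \<in> V" "has_large_layer v" "3 \<le> card (nbhd V E v)"
  shows "card (non_nbhd v) \<le> 2"
proof -
  obtain j where j: "1 \<le> j" "card (V - insert v (layer v j)) \<le> 2"
    using large_layerE[OF assms(1,2)] .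
  show ?thesis
  proof (cases "j = 1")
    case True
    then have "non_nbhd v = V - insert v (layer v j)"
      using layer_1[OF assms(1)] mem_nbhd_iff unfolding non_nbhd_def by auto
    then show ?thesis using j(2) by simp
  next
    case False
    then have "card (nbhd V E v) \<le> card (V - insert v (layer v j))"
      using nbhd_subset_outside_layer[OF assms(1)] finite_V by (intro card_mono) auto
    then have "card (nbhd V E v) \<le> 2"
      using j(2) by linarith
    then show ?thesis using assms(3) by simp
  qed
qed

section \<open>Two vertices outside a large layer\<close>

context
  fixes v j B Out
  assumes v_in_V: "v \<in> V" and j_neq_1: "j \<noteq> 1"
    and B_def: "B = layer v j" and Out_def: "Out = V - insert v B" and card_Out: "card Out = 2"
begin

lemma layer_split:
  shows "B \<subseteq> V - {v}" "Out \<subseteq> V" "Out \<inter> insert v B = {}" "V = insert v (Out \<union> B)"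
  using layer_subset v_in_V unfolding B_def Out_def by auto

lemma card_V_layer: "card V = card B + 3"
proof -
  have "card B \<le> card (V - {v})"
    using layer_split(1) finite_V by (intro card_mono) auto
  then show ?thesis
    using card_outside_layer[OF v_in_V, of j] card_Out v_in_V finite_V nine_le_card
    unfolding Out_def B_def by simp
qed

lemma six_le_card_layer: "6 \<le> card B"
  using card_V_layer nine_le_card by simp

lemma not_adj_layer: "b \<in> B \<Longrightarrow> \<not> E v b"
  using adj_layer_iff[OF v_in_V] j_neq_1 unfolding B_def by blast

lemma layer_resolved_by_center:
  assumes "U \<subseteq> Out \<union> B" "x \<in> Out" "b \<in> B"
  shows "resolved_outside U x b"
  using assms v_in_V layer_split unfolding resolved_outside_def B_def Out_def layer_def by auto

lemma resolved_by_outside_neighbour: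
  assumes "U \<subseteq> insert v B" "a \<in> V" "b \<in> V" "x \<in> Out" "E a x \<noteq> E b x"
  shows "resolved_outside U a b"
  using assms layer_split adj_sym by (intro resolved_outside_if_adj_differs[of x]) auto

lemma nbhd_Diff_outside_if_layer_clique:
  assumes clique: "\<And>c d. c \<in> B \<Longrightarrow> d \<in> B \<Longrightarrow> c \<noteq> d \<Longrightarrow> E c d" and "y \<in> B"
  shows "nbhd V E y - Out = B - {y}"
proof (intro set_eqI iffI)
  fix w assume "w \<in> nbhd V E y - Out"
  then have "E y w" "w \<notin> Out"
    by (auto simp: mem_nbhd_iff)
  moreover have "w \<noteq> v"
    using \<open>E y w\<close> not_adj_layer[OF assms(2)] adj_sym by blast
  ultimately show "w \<in> B - {y}"
    using adj_in_V(2) layer_split(4) not_adj_self by blast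
next
  fix w assume "w \<in> B - {y}"
  then show "w \<in> nbhd V E y - Out"
    using clique assms(2) layer_split(3) by (auto simp: mem_nbhd_iff)
qed

lemma center_resolved_if_layer_clique:
  assumes clique: "\<And>c d. c \<in> B \<Longrightarrow> d \<in> B \<Longrightarrow> c \<noteq> d \<Longrightarrow> E c d"
    and U: "U \<subseteq> insert v B" "card U = 6" "v \<in> U" and c: "c \<in> U" "c \<in> B"
  shows "resolved_outside U v c"
proof -
  \<comment> \<open>B has a vertex outside U, and it sees c but not v\<close>
  have "card (U - {v}) < card B"
    using U(2,3) six_le_card_layer by (simp add: card_Diff_singleton_if)
  moreover have "finite U"
    using U(2) card.infinite by fastforce
  ultimately obtain c' where "c' \<in> B" "c' \<notin> U - {v}"
    using ex_in_diff_if_card_less[of "U - {v}" B] by blast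
  moreover have "c' \<noteq> v" using \<open>c' \<in> B\<close> layer_split(1) by auto
  ultimately show ?thesis
    using c clique not_adj_layer[of c'] adj_sym[of c' v] layer_split(1) v_in_V
    by (intro resolved_outside_if_adj_differs[of c']) auto
qed

lemma card_same_Out_nbhd_if_layer_clique:
  assumes clique: "\<And>c d. c \<in> B \<Longrightarrow> d \<in> B \<Longrightarrow> c \<noteq> d \<Longrightarrow> E c d" and "x \<in> B"
  shows "2 * card {y\<in>B. nbhd V E y \<inter> Out = nbhd V E x \<inter> Out} \<le> card V"
proof (rule card_twin_set_le)
  show "{y\<in>B. nbhd V E y \<inter> Out = nbhd V E x \<inter> Out} \<subseteq> V"
    using layer_split(1) by blast
  show "x \<in> {y\<in>B. nbhd V E y \<inter> Out = nbhd V E x \<inter> Out}"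
    using assms(2) by simp
  show "nbhd V E x - {y} = nbhd V E y - {x}"
    if "y \<in> {y\<in>B. nbhd V E y \<inter> Out = nbhd V E x \<inter> Out}" for y
  proof -
    have "y \<in> B" "nbhd V E x \<inter> Out = nbhd V E y \<inter> Out"
      using that by auto
    then show ?thesis
      using nbhd_Diff_outside_if_layer_clique[OF clique \<open>x \<in> B\<close>]
        nbhd_Diff_outside_if_layer_clique[OF clique \<open>y \<in> B\<close>] \<open>x \<in> B\<close> layer_split(3)
      by blast
  qed
qed

lemma has_three_resolved_pairs_if_layer_clique:
  assumes clique: "\<And>c d. c \<in> B \<Longrightarrow> d \<in> B \<Longrightarrow> c \<noteq> d \<Longrightarrow> E c d"
  shows has_three_resolved_pairs
proof -
  let ?P = "insert v B"
  \<comment> \<open>vertices of the clique B are twins as soon as they see the same part of Out\<close>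
  let ?f = "\<lambda>x. if x = v then None else Some (nbhd V E x \<inter> Out)"
  have card_P: "card ?P = card B + 1"
    using layer_split(1) finite_subset[OF _ finite_V] by (simp add: subset_Diff_insert)
  have "\<exists>ps. length ps = 3 \<and> resolved_pairs ps"
  proof (rule resolved_pairs_from_distinct_values[where f = ?f])
    show "?P \<subseteq> V" "2 * 3 \<le> card ?P"
      using layer_split v_in_V card_P six_le_card_layer by auto
    show "card {y\<in>?P. ?f y = ?f x} + 3 \<le> card ?P" if "x \<in> ?P" for x
    proof (cases "x = v")
      case True
      then have "{y\<in>?P. ?f y = ?f x} = {v}" by auto
      then show ?thesis using card_P six_le_card_layer by simp
    next
      case False
      then have "{y\<in>?P. ?f y = ?f x} = {y\<in>B. nbhd V E y \<inter> Out = nbhd V E x \<inter> Out}"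
        using layer_split(1) by auto
      moreover have "x \<in> B"
        using that False by simp
      ultimately show ?thesis
        using card_same_Out_nbhd_if_layer_clique[OF clique] card_P card_V_layer six_le_card_layer
        by fastforce
    qed
    show "resolved_outside U a b"
      if U: "U \<subseteq> ?P" "card U = 2 * 3" "a \<in> U" "b \<in> U" "?f a \<noteq> ?f b" for U a b
    proof -
      consider "a = v" | "b = v" | "a \<in> B" "b \<in> B"
        using U by auto
      then show ?thesis
      proof cases
        case 1
        then have "b \<in> B"
          using U by (auto split: if_splits)
        then show ?thesis
          using center_resolved_if_layer_clique[OF clique U(1) U(2)[simplified]] U(3,4) 1 by simp
      next
        case 2
        then have "a \<in> B"
          using U by (auto split: if_splits)
        then show ?thesis
          using center_resolved_if_layer_clique[OF clique U(1) U(2)[simplified]] U(3,4) 2 resolved_outside_sym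
          by simp
      next
        case 3
        then have "a \<noteq> v" "b \<noteq> v"
          using layer_split(1) by auto
        then have "nbhd V E a \<inter> Out \<noteq> nbhd V E b \<inter> Out"
          using U(5) by simp
        then obtain x where "x \<in> Out" "(x \<in> nbhd V E a) \<noteq> (x \<in> nbhd V E b)"
          by blast
        then have "x \<in> Out" "E a x \<noteq> E b x"
          by (simp_all add: mem_nbhd_iff)
        then show ?thesis
          using resolved_by_outside_neighbour U(1) 3 layer_split(1) by blast
      qed
    qed
  qed
  then show ?thesis
    unfolding has_three_resolved_pairs_def .
qed

lemma has_three_resolved_pairs_if_layer_independent:
  assumes independent: "\<And>c d. c \<in> B \<Longrightarrow> d \<in> B \<Longrightarrow> \<not> E c d"
  shows has_three_resolved_pairs
proof -
  let ?P = "insert v B"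
  have card_P: "card ?P = card B + 1"
    using layer_split(1) finite_subset[OF _ finite_V] by (simp add: subset_Diff_insert)
  have nbhd_P: "nbhd V E x \<subseteq> Out" if "x \<in> ?P" for x
  proof
    fix w assume "w \<in> nbhd V E x"
    then have "E x w" "w \<in> V" "w \<noteq> x"
      using mem_nbhd_iff adj_in_V(2) not_adj_self by blast+
    moreover have "w \<notin> B"
      using that \<open>E x w\<close> independent not_adj_layer by auto
    moreover have "w \<noteq> v"
      using that \<open>E x w\<close> not_adj_layer adj_sym not_adj_self by auto
    ultimately show "w \<in> Out"
      using layer_split(4) by blast
  qed
  have "\<exists>ps. length ps = 3 \<and> resolved_pairs ps"
  proof (rule resolved_pairs_from_distinct_values[where f = "nbhd V E"])
    show "?P \<subseteq> V" "2 * 3 \<le> card ?P"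
      using layer_split v_in_V card_P six_le_card_layer by auto
    show "card {y\<in>?P. nbhd V E y = nbhd V E x} + 3 \<le> card ?P" for x
    proof -
      have "2 * card {y\<in>?P. nbhd V E y = nbhd V E x} \<le> card V"
        using layer_split(1) v_in_V by (intro card_same_nbhd_le) auto
      then show ?thesis
        using card_P card_V_layer six_le_card_layer by linarith
    qed
    show "resolved_outside U a b"
      if U: "U \<subseteq> ?P" "card U = 2 * 3" "a \<in> U" "b \<in> U" "nbhd V E a \<noteq> nbhd V E b" for U a b
    proof -
      obtain x where x: "(x \<in> nbhd V E a) \<noteq> (x \<in> nbhd V E b)"
        using U(5) by blast
      then have "x \<in> Out"
        using nbhd_P U(1,3,4) by blast
      moreover have "E a x \<noteq> E b x"
        using x by (simp add: mem_nbhd_iff)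
      moreover have "a \<in> V" "b \<in> V"
        using U layer_split(1) v_in_V by auto
      ultimately show ?thesis
        using resolved_by_outside_neighbour[OF U(1)] by blast
    qed
  qed
  then show ?thesis
    unfolding has_three_resolved_pairs_def .
qed

lemma has_three_resolved_pairs_if_two_outside_layer: has_three_resolved_pairs
proof (cases "\<exists>a\<in>B. \<exists>b\<in>B. \<exists>z\<in>B. a \<noteq> b \<and> a \<noteq> z \<and> b \<noteq> z \<and> E z a \<and> \<not> E z b")
  case True
  \<comment> \<open>two pairs from Out \<times> B resolved by v, and the pair a, b resolved by z\<close>
  then obtain a b z where abz: "a \<in> B" "b \<in> B" "z \<in> B" "a \<noteq> b" "a \<noteq> z" "b \<noteq> z"
    "E z a" "\<not> E z b"
    by blast
  obtain o1 o2 where o12: "Out = {o1, o2}" "o1 \<noteq> o2"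
    using card_Out by (meson card_2_iff)
  have "card {a, b, z} < card B"
    using six_le_card_layer by (simp add: card_insert_if)
  then obtain b1 where b1: "b1 \<in> B" "b1 \<notin> {a, b, z}"
    using ex_in_diff_if_card_less[of "{a, b, z}"] by auto
  have "card {a, b, z, b1} < card B"
    using six_le_card_layer by (simp add: card_insert_if)
  then obtain b2 where b2: "b2 \<in> B" "b2 \<notin> {a, b, z, b1}"
    using ex_in_diff_if_card_less[of "{a, b, z, b1}"] by auto
  let ?U = "{o1, b1, o2, b2, a, b}"
  have O_B: "o1 \<notin> B" "o2 \<notin> B" "o1 \<in> V" "o2 \<in> V" "B \<subseteq> V"
    using o12 layer_split by auto
  then have U: "?U \<subseteq> Out \<union> B" "distinct [o1, b1, o2, b2, a, b]" "?U \<subseteq> V"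
    using o12 abz b1 b2 by auto
  show ?thesis
  proof (rule has_three_resolved_pairsI[OF U(2,3)])
    show "resolved_outside ?U o1 b1" "resolved_outside ?U o2 b2"
      using layer_resolved_by_center[OF U(1)] o12 b1 b2 by auto
    show "resolved_outside ?U a b"
      using abz b1 b2 O_B by (intro resolved_outside_if_adj_differs[of z]) auto
  qed
next
  case False
  then have "(\<forall>c\<in>B. \<forall>d\<in>B. c \<noteq> d \<longrightarrow> E c d) \<or> (\<forall>c\<in>B. \<forall>d\<in>B. \<not> E c d)"
    by (intro clique_or_independent) blast
  then show ?thesis
  proof
    assume "\<forall>c\<in>B. \<forall>d\<in>B. c \<noteq> d \<longrightarrow> E c d"
    then show ?thesis by (intro has_three_resolved_pairs_if_layer_clique) blast
  next
    assume "\<forall>c\<in>B. \<forall>d\<in>B. \<not> E c d"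
    then show ?thesis by (intro has_three_resolved_pairs_if_layer_independent) blast
  qed
qed

end

lemma pendant_at_universal_if_low_degree:
  assumes v: "v \<in> V" "has_large_layer v" "card (nbhd V E v) \<le> 2"
    and no_pairs: "\<not> has_three_resolved_pairs"
  obtains x where "x \<in> V" "nbhd V E v = {x}" "\<And>u. u \<in> V \<Longrightarrow> u \<noteq> x \<Longrightarrow> E x u"
proof -
  obtain j where j: "1 \<le> j" "card (V - insert v (layer v j)) \<le> 2"
    using large_layerE[OF v(1,2)] .
  let ?B = "layer v j"
  let ?Out = "V - insert v ?B"
  have "j \<noteq> 1"
    using j(2) card_outside_layer[OF v(1)] layer_1[OF v(1)] v(3) nine_le_card by auto
  then have nbhd_Out: "nbhd V E v \<subseteq> ?Out"
    by (rule nbhd_subset_outside_layer[OF v(1)])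
  moreover have "nbhd V E v \<noteq> {}"
    using nbhd_nonempty[OF v(1)] nine_le_card by force
  ultimately have "card ?Out \<noteq> 0"
    using finite_V by auto
  moreover have "card ?Out \<noteq> 2"
    using has_three_resolved_pairs_if_two_outside_layer[OF v(1) \<open>j \<noteq> 1\<close> refl refl] no_pairs by blast
  ultimately obtain x where x: "?Out = {x}"
    using j(2) card_1_singletonE by (metis One_nat_def le_Suc_eq le_zero_eq numeral_2_eq_2)
  have "x \<in> V" "nbhd V E v = {x}"
    using x nbhd_Out \<open>nbhd V E v \<noteq> {}\<close> by auto
  moreover have "E x u" if u: "u \<in> V" "u \<noteq> x" for u
  proof (cases "u = v")
    case True
    then show ?thesis using \<open>nbhd V E v = {x}\<close> mem_nbhd_iff adj_sym by blast
  next
    case False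
    \<comment> \<open>a shortest path from u to v leaves the layer through x\<close>
    then have "gdist V E u v = Suc (j - 1)"
      using u x j(1) unfolding layer_def by auto
    then obtain w where w: "E u w" "gdist V E w v = j - 1"
      using gdist_SucE[OF u(1) v(1)] by blast
    then have "w \<noteq> v" "w \<notin> ?B" "w \<in> V"
      using \<open>j \<noteq> 1\<close> j(1) gdist_self[OF v(1)] adj_in_V(2) unfolding layer_def by auto
    then have "w = x"
      using x by blast
    then show ?thesis using w(1) adj_sym by blast
  qed
  ultimately show ?thesis
    using that by blast
qed

section \<open>Vertices with at most two non-neighbours\<close>

lemma five_le_card_non_universal: "5 \<le> card {d\<in>V. non_nbhd d \<noteq> {}}"
proof -
  let ?U = "{d\<in>V. non_nbhd d = {}}"
  have "2 * card ?U \<le> card V"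
    by (rule card_same_non_nbhd_le[where A = "{}"]) auto
  moreover have "{d\<in>V. non_nbhd d \<noteq> {}} = V - ?U"
    by auto
  moreover have "card (V - ?U) = card V - card ?U"
    using finite_V by (intro card_Diff_subset) auto
  ultimately have "card {d\<in>V. non_nbhd d \<noteq> {}} = card V - card ?U"
    by simp
  with \<open>2 * card ?U \<le> card V\<close> show ?thesis
    using nine_le_card by linarith
qed

lemma has_three_resolved_pairs_if_co_pair:
  assumes z: "z \<in> V" "non_nbhd z = {a1, a2}" "a1 \<noteq> a2"
    and c: "c \<in> V" "c \<notin> {z, a1, a2}" and t: "t \<in> non_nbhd c" "t \<notin> {a1, a2}"
    and "card (non_nbhd t) \<le> 2"
  shows has_three_resolved_pairs
proof -
  \<comment> \<open>z resolves a1, a2 from two of its neighbours and t resolves c from one of its own\<close>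
  have a: "a1 \<in> V" "a1 \<noteq> z" "\<not> E z a1" "a2 \<in> V" "a2 \<noteq> z" "\<not> E z a2"
    using z(2) mem_non_nbhd_iff by blast+
  have t': "t \<in> V" "t \<noteq> c" "\<not> E t c" "t \<noteq> z"
    using t c z(2) mem_non_nbhd_iff non_nbhd_sym[OF c(1) t(1)] adj_sym by auto
  let ?X = "{z, a1, a2, c, t} \<union> non_nbhd t"
  have "card ?X \<le> card {z, a1, a2, c, t} + card (non_nbhd t)"
    by (rule card_Un_le)
  also have "\<dots> \<le> 5 + 2"
    using assms(8) by (intro add_mono) (auto simp: card_insert_if)
  finally have "card ?X + 2 \<le> card V"
    using nine_le_card by simp
  then obtain b3 where b3: "b3 \<in> V" "b3 \<notin> ?X"
    using ex_in_diff_if_card_less[of ?X V] finite_non_nbhd by auto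
  have "card {z, a1, a2, c, t, b3} + 3 \<le> card V"
    using nine_le_card card_insert_le[of "{a1, a2, c, t, b3}"] by (simp add: card_insert_if)
  then obtain b1 b2 b0 where b12: "b1 \<in> V - {z, a1, a2, c, t, b3}" "b2 \<in> V - {z, a1, a2, c, t, b3}"
    "b0 \<in> V - {z, a1, a2, c, t, b3}" "distinct [b1, b2, b0]"
    by (rule obtain_three_outside) auto
  have "E z b1" "E z b2" "E t b3"
    using b12 b3 z(2) t'(1) by (auto intro: adj_if_not_in_non_nbhd)
  then show ?thesis
    using a t' b12 b3 c z(1,3) t(2)
    by (intro has_three_resolved_pairs_by_adjacency[of b1 a1 b2 a2 b3 c z z t]) auto
qed

lemma has_three_resolved_pairs_if_co_degree_two_confined:
  assumes co2: "\<And>u. u \<in> V \<Longrightarrow> card (non_nbhd u) \<le> 2"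
    and z: "z \<in> V" "non_nbhd z = {a1, a2}" "a1 \<noteq> a2"
    and confined: "\<And>c. c \<in> V \<Longrightarrow> c \<notin> {z, a1, a2} \<Longrightarrow> non_nbhd c \<subseteq> {a1, a2}"
  shows has_three_resolved_pairs
proof -
  \<comment> \<open>two further non-universal vertices miss only a1 or a2, and they cannot share one\<close>
  have a: "a1 \<in> V" "a2 \<in> V" "z \<in> non_nbhd a1" "z \<in> non_nbhd a2" "a1 \<noteq> z" "a2 \<noteq> z"
    using z(2) mem_non_nbhd_iff non_nbhd_sym[OF z(1)] by auto
  let ?D = "{d\<in>V. non_nbhd d \<noteq> {}}"
  have "card {z, a1, a2} < card ?D"
    using five_le_card_non_universal by (simp add: card_insert_if)
  then obtain c1 where c1: "c1 \<in> ?D" "c1 \<notin> {z, a1, a2}"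
    using ex_in_diff_if_card_less[of "{z, a1, a2}" ?D] by auto
  have "card {z, a1, a2, c1} < card ?D"
    using five_le_card_non_universal by (simp add: card_insert_if)
  then obtain c2 where c2: "c2 \<in> ?D" "c2 \<notin> {z, a1, a2, c1}"
    using ex_in_diff_if_card_less[of "{z, a1, a2, c1}" ?D] by auto
  have c_in_V: "c1 \<in> V" "c2 \<in> V"
    using c1 c2 by auto
  have co_pair: ?thesis
    if ai: "ai \<in> {a1, a2}" "aj \<in> {a1, a2}" "ai \<noteq> aj" "ai \<in> non_nbhd c1" "aj \<in> non_nbhd c2"
    for ai aj
  proof -
    have "ai \<in> V" "aj \<in> V" "z \<noteq> c1"
      using ai(1,2) a c1(2) by auto
    have "{z, c1} \<subseteq> non_nbhd ai"
      using ai(1) a non_nbhd_sym[OF c_in_V(1) ai(4)] by auto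
    moreover have "card (non_nbhd ai) \<le> card {z, c1}"
      using co2[OF \<open>ai \<in> V\<close>] \<open>z \<noteq> c1\<close> by simp
    ultimately have "non_nbhd ai = {z, c1}"
      using card_seteq[OF finite_non_nbhd] by blast
    moreover have "c2 \<notin> {ai, z, c1}" "aj \<notin> {z, c1}"
      using c2(2) ai(1,2,3) c1(2) a(5,6) by auto
    ultimately show ?thesis
      using has_three_resolved_pairs_if_co_pair[OF \<open>ai \<in> V\<close> _ \<open>z \<noteq> c1\<close> c_in_V(2) _ ai(5)]
        co2[OF \<open>aj \<in> V\<close>] by blast
  qed
  have not_both: "a \<notin> non_nbhd c1 \<inter> non_nbhd c2" if "a \<in> {a1, a2}" for a
  proof
    assume "a \<in> non_nbhd c1 \<inter> non_nbhd c2"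
    then have "{z, c1, c2} \<subseteq> non_nbhd a"
      using that a non_nbhd_sym[OF c_in_V(1)] non_nbhd_sym[OF c_in_V(2)] by auto
    moreover have "card {z, c1, c2} = 3"
      using c1 c2 by (auto simp: card_insert_if)
    ultimately show False
      using co2[of a] card_mono[OF finite_non_nbhd, of "{z, c1, c2}" a] a(1,2) that by auto
  qed
  have "non_nbhd c1 \<noteq> {}" "non_nbhd c2 \<noteq> {}" "non_nbhd c1 \<subseteq> {a1, a2}" "non_nbhd c2 \<subseteq> {a1, a2}"
    using c1 c2 confined by auto
  then have "(a1 \<in> non_nbhd c1 \<and> a2 \<in> non_nbhd c2) \<or> (a2 \<in> non_nbhd c1 \<and> a1 \<in> non_nbhd c2)"
    using not_both by blast
  then show ?thesis
    using co_pair[of a1 a2] co_pair[of a2 a1] z(3) by blast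
qed

lemma has_three_resolved_pairs_if_co_degree_two:
  assumes co2: "\<And>u. u \<in> V \<Longrightarrow> card (non_nbhd u) \<le> 2"
    and z: "z \<in> V" "card (non_nbhd z) = 2"
  shows has_three_resolved_pairs
proof -
  obtain a1 a2 where nz: "non_nbhd z = {a1, a2}" "a1 \<noteq> a2"
    using z(2) by (meson card_2_iff)
  show ?thesis
  proof (cases "\<exists>c t. c \<in> V \<and> c \<notin> {z, a1, a2} \<and> t \<in> non_nbhd c \<and> t \<notin> {a1, a2}")
    case True
    then obtain c t where ct: "c \<in> V" "c \<notin> {z, a1, a2}" "t \<in> non_nbhd c" "t \<notin> {a1, a2}"
      by blast
    then have "t \<in> V"
      by (simp add: mem_non_nbhd_iff)
    show ?thesis
      by (rule has_three_resolved_pairs_if_co_pair[OF z(1) nz ct co2[OF \<open>t \<in> V\<close>]])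
  next
    case False
    then show ?thesis
      using has_three_resolved_pairs_if_co_degree_two_confined[OF co2 z(1) nz] by blast
  qed
qed

lemma non_nbhd_Diff_mates_nonempty:
  assumes "non_nbhd w \<inter> X = {m}" "non_nbhd m \<inter> X = {w}" "d \<in> X - {w, m}" "X \<subseteq> V"
    and "non_nbhd d \<inter> X \<noteq> {}"
  shows "non_nbhd d \<inter> (X - {w, m}) \<noteq> {}"
proof -
  obtain e where e: "e \<in> non_nbhd d" "e \<in> X"
    using assms(5) by blast
  have "d \<in> non_nbhd e"
    using non_nbhd_sym e assms(3,4) by blast
  then have "e \<noteq> w" "e \<noteq> m"
    using assms(1-3) by auto
  then show ?thesis
    using e by blast
qed

lemma disjoint_non_adjacent_pairs:
  assumes "X \<subseteq> V" "\<And>y. y \<in> X \<Longrightarrow> card (non_nbhd y \<inter> X) \<le> 1"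
    and "2 * k \<le> card {d\<in>X. non_nbhd d \<inter> X \<noteq> {}} + 1"
  shows "\<exists>ps. length ps = k \<and> distinct (flat_pairs ps) \<and> set (flat_pairs ps) \<subseteq> X \<and>
    (\<forall>(w, m)\<in>set ps. non_nbhd m \<inter> X = {w})"
  using assms
proof (induction k arbitrary: X)
  case 0
  show ?case by (intro exI[of _ "[]"]) simp
next
  case (Suc k)
  let ?D = "{d\<in>X. non_nbhd d \<inter> X \<noteq> {}}"
  have unique: "non_nbhd y \<inter> X = {m}" if "y \<in> X" "m \<in> non_nbhd y" "m \<in> X" for y m
    using Suc.prems(2)[OF that(1)] that finite_non_nbhd card_le_Suc0_iff_eq[of "non_nbhd y \<inter> X"]
    by auto
  have "?D \<noteq> {}"
    using Suc.prems(3) by (intro notI) simp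
  then obtain w m where w: "w \<in> X" "m \<in> non_nbhd w" "m \<in> X"
    by blast
  have mates: "non_nbhd w \<inter> X = {m}" "non_nbhd m \<inter> X = {w}"
    using unique w non_nbhd_sym[of w m] Suc.prems(1) by auto
  have "w \<noteq> m"
    using w(2) mem_non_nbhd_iff by blast
  let ?X' = "X - {w, m}"
  have "?D - {w, m} \<subseteq> {d\<in>?X'. non_nbhd d \<inter> ?X' \<noteq> {}}"
    using non_nbhd_Diff_mates_nonempty[OF mates _ Suc.prems(1)] by auto
  moreover have "card (?D - {w, m}) = card ?D - 2"
    using mates \<open>w \<noteq> m\<close> w finite_subset[OF Suc.prems(1) finite_V] by (simp add: card_Diff_subset)
  moreover have "finite ?X'"
    using finite_subset[OF Suc.prems(1) finite_V] by simp
  ultimately have "2 * k \<le> card {d\<in>?X'. non_nbhd d \<inter> ?X' \<noteq> {}} + 1"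
    using Suc.prems(3) card_mono[of "{d\<in>?X'. non_nbhd d \<inter> ?X' \<noteq> {}}" "?D - {w, m}"] by simp
  moreover have "card (non_nbhd y \<inter> ?X') \<le> 1" if "y \<in> ?X'" for y
    using Suc.prems(2)[of y] that card_mono[OF _ Int_mono[OF order_refl Diff_subset]] finite_non_nbhd
    by (meson DiffD1 finite_Int le_trans)
  ultimately obtain ps where ps: "length ps = k" "distinct (flat_pairs ps)" "set (flat_pairs ps) \<subseteq> ?X'"
    "\<forall>(w, m)\<in>set ps. non_nbhd m \<inter> ?X' = {w}"
    using Suc.IH[of ?X'] Suc.prems(1) by blast
  have "non_nbhd m' \<inter> X = {w'}" if "(w', m') \<in> set ps" for w' m'
  proof (rule unique)
    show "m' \<in> X" "w' \<in> X"
      using ps(3) that unfolding set_flat_pairs by auto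
    show "w' \<in> non_nbhd m'"
      using ps(4) that by auto
  qed
  then show ?case
    using ps w mates \<open>w \<noteq> m\<close> by (intro exI[of _ "(w, m) # ps"]) auto
qed

lemma has_three_resolved_pairs_if_co_degree_one:
  assumes co1: "\<And>u. u \<in> V \<Longrightarrow> card (non_nbhd u) \<le> 1"
  shows has_three_resolved_pairs
proof -
  \<comment> \<open>three disjoint non-adjacent pairs w, m; then m resolves w from any third vertex\<close>
  have "non_nbhd u \<inter> V = non_nbhd u" for u
    using non_nbhd_subset by blast
  then obtain ps where ps: "length ps = 3" "distinct (flat_pairs ps)" "set (flat_pairs ps) \<subseteq> V"
    "\<forall>(w, m)\<in>set ps. non_nbhd m = {w}"
    using disjoint_non_adjacent_pairs[of V 3] co1 five_le_card_non_universal by auto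
  then obtain w1 m1 w2 m2 w3 m3 where ps_eq: "ps = [(w1, m1), (w2, m2), (w3, m3)]"
    by (auto simp: numeral_3_eq_3 length_Suc_conv)
  let ?U = "{w1, m1, w2, m2, w3, m3}"
  have "card ?U + 3 \<le> card V"
    using nine_le_card card_insert_le[of "{m1, w2, m2, w3, m3}"] by (simp add: card_insert_if)
  then obtain e1 e2 e3 where e: "e1 \<in> V - ?U" "e2 \<in> V - ?U" "e3 \<in> V - ?U" "distinct [e1, e2, e3]"
    by (rule obtain_three_outside) simp
  have non: "non_nbhd m1 = {w1}" "non_nbhd m2 = {w2}" "non_nbhd m3 = {w3}"
    using ps(4) unfolding ps_eq by auto
  have "E m1 e1" "E m2 e2" "E m3 e3"
    using e non ps(3) unfolding ps_eq by (auto intro: adj_if_not_in_non_nbhd)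
  moreover have "\<not> E m1 w1" "\<not> E m2 w2" "\<not> E m3 w3"
    using non mem_non_nbhd_iff by blast+
  ultimately show ?thesis
    using e ps(2,3) unfolding ps_eq
    by (intro has_three_resolved_pairs_by_adjacency[of e1 w1 e2 w2 e3 w3 m1 m2 m3]) auto
qed

lemma has_three_resolved_pairs_if_co_degree_le_2:
  assumes "\<And>u. u \<in> V \<Longrightarrow> card (non_nbhd u) \<le> 2"
  shows has_three_resolved_pairs
proof (cases "\<exists>z\<in>V. card (non_nbhd z) = 2")
  case True
  then show ?thesis
    using has_three_resolved_pairs_if_co_degree_two assms by blast
next
  case False
  then have "card (non_nbhd u) \<le> 1" if "u \<in> V" for u
    using assms[OF that] that by fastforce
  then show ?thesis
    by (rule has_three_resolved_pairs_if_co_degree_one)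
qed

section \<open>A pendant vertex at a universal vertex\<close>

context
  fixes v x
  assumes v_pendant: "v \<in> V" "nbhd V E v = {x}"
    and x_universal: "x \<in> V" "\<And>u. u \<in> V \<Longrightarrow> u \<noteq> x \<Longrightarrow> E x u"
    and pendant_or_co_degree_le_2: "\<And>u. u \<in> V \<Longrightarrow> nbhd V E u = {x} \<or> card (non_nbhd u) \<le> 2"
begin

lemma pendants_eq: "{u\<in>V. nbhd V E u = {x}} = {v}"
proof (rule ccontr)
  let ?Pd = "{u\<in>V. nbhd V E u = {x}}"
  let ?B = "V - insert x ?Pd"
  assume "?Pd \<noteq> {v}"
  moreover have "v \<in> ?Pd"
    using v_pendant by simp
  ultimately obtain p where p: "p \<in> ?Pd" "p \<noteq> v"
    by blast
  have "x \<notin> ?Pd"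
    using mem_nbhd_iff not_adj_self by auto
  have Pd_non_nbhd: "?Pd \<subseteq> non_nbhd w" if "w \<in> ?B" for w
    using that mem_nbhd_iff adj_sym unfolding non_nbhd_def by fastforce
  have "2 * card ?Pd \<le> card V"
    by (rule card_same_nbhd_le) auto
  moreover have card_B: "card ?B = card V - 1 - card ?Pd"
    using \<open>x \<notin> ?Pd\<close> x_universal(1) finite_V by (simp add: card_Diff_subset)
  ultimately have "?B \<noteq> {}"
    using nine_le_card by (intro notI) simp
  then obtain w0 where "w0 \<in> ?B" by blast
  have co2: "card (non_nbhd w) \<le> 2" if "w \<in> ?B" for w
    using pendant_or_co_degree_le_2 that by blast
  have "card {v, p} \<le> 2" "{v, p} \<subseteq> non_nbhd w" if "w \<in> ?B" for w
    using Pd_non_nbhd[OF that] \<open>v \<in> ?Pd\<close> p(1) by (auto simp: card_insert_if)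
  have "non_nbhd w = {v, p}" if "w \<in> ?B" for w
    using card_seteq[OF finite_non_nbhd, of "{v, p}" w] Pd_non_nbhd[OF that] \<open>v \<in> ?Pd\<close> p co2[OF that]
    by auto
  then have "2 * card ?B \<le> card V"
    by (intro card_same_non_nbhd_le[where A = "{v, p}"]) auto
  moreover have "card ?Pd \<le> 2"
    using card_mono[OF finite_non_nbhd Pd_non_nbhd[OF \<open>w0 \<in> ?B\<close>]] co2[OF \<open>w0 \<in> ?B\<close>] by simp
  ultimately show False
    using card_B nine_le_card by linarith
qed

lemma non_nbhd_off_pendant:
  assumes "w \<in> V - {x, v}"
  shows "non_nbhd w = insert v (non_nbhd w \<inter> (V - {x, v}))"
proof -
  have "v \<in> non_nbhd w"
    using assms v_pendant mem_nbhd_iff adj_sym unfolding non_nbhd_def by blast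
  moreover have "x \<notin> non_nbhd w"
    using assms x_universal adj_sym unfolding non_nbhd_def by blast
  ultimately show ?thesis
    using non_nbhd_subset by blast
qed

lemma card_non_nbhd_off_pendant_le_1:
  assumes "w \<in> V - {x, v}"
  shows "card (non_nbhd w \<inter> (V - {x, v})) \<le> 1"
proof -
  have "card (non_nbhd w) = card (insert v (non_nbhd w \<inter> (V - {x, v})))"
    using arg_cong[OF non_nbhd_off_pendant[OF assms], of card] .
  also have "\<dots> = Suc (card (non_nbhd w \<inter> (V - {x, v})))"
    using finite_non_nbhd[of w] by simp
  finally show ?thesis
    using pendant_or_co_degree_le_2[of w] pendants_eq assms by auto
qed

lemma two_non_adjacent_pairs_off_pendant:
  obtains w1 m1 w2 m2 where "distinct [w1, m1, w2, m2]" "{w1, m1, w2, m2} \<subseteq> V - {x, v}"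
    "non_nbhd m1 \<inter> (V - {x, v}) = {w1}" "non_nbhd m2 \<inter> (V - {x, v}) = {w2}"
proof -
  let ?B = "V - {x, v}"
  \<comment> \<open>the vertices of B missing only v are pairwise twins, so at least three others remain\<close>
  let ?Full = "{w\<in>?B. non_nbhd w \<inter> ?B = {}}"
  have "2 * card ?Full \<le> card V"
  proof (rule card_same_non_nbhd_le[where A = "{v}"])
    show "non_nbhd w = {v}" if "w \<in> ?Full" for w
    proof -
      have "non_nbhd w = insert v (non_nbhd w \<inter> ?B)" "non_nbhd w \<inter> ?B = {}"
        using non_nbhd_off_pendant that by auto
      then show ?thesis by metis
    qed
  qed auto
  moreover have "{d\<in>?B. non_nbhd d \<inter> ?B \<noteq> {}} = ?B - ?Full"
    by auto
  moreover have "card (?B - ?Full) = card ?B - card ?Full"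
    using finite_V by (intro card_Diff_subset) auto
  moreover have "x \<noteq> v"
    using v_pendant mem_nbhd_iff not_adj_self by blast
  then have "card ?B = card V - 2"
    using v_pendant(1) x_universal(1) finite_V by (simp add: card_Diff_subset)
  ultimately have "2 * 2 \<le> card {d\<in>?B. non_nbhd d \<inter> ?B \<noteq> {}} + 1"
    using nine_le_card by simp
  then obtain ps where ps: "length ps = 2" "distinct (flat_pairs ps)" "set (flat_pairs ps) \<subseteq> ?B"
    "\<forall>(w, m)\<in>set ps. non_nbhd m \<inter> ?B = {w}"
    using disjoint_non_adjacent_pairs[of ?B 2] card_non_nbhd_off_pendant_le_1 by auto
  then obtain w1 m1 w2 m2 where "ps = [(w1, m1), (w2, m2)]"
    by (auto simp: numeral_2_eq_2 length_Suc_conv)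
  with ps show ?thesis
    using that by auto
qed

lemma has_three_resolved_pairs_with_pendant: has_three_resolved_pairs
proof -
  \<comment> \<open>v resolves x from any vertex of B, and m resolves its non-neighbour w from any other\<close>
  let ?B = "V - {x, v}"
  obtain w1 m1 w2 m2 where wm: "distinct [w1, m1, w2, m2]" "{w1, m1, w2, m2} \<subseteq> ?B"
    "non_nbhd m1 \<inter> ?B = {w1}" "non_nbhd m2 \<inter> ?B = {w2}"
    by (rule two_non_adjacent_pairs_off_pendant)
  have "x \<noteq> v"
    using v_pendant mem_nbhd_iff not_adj_self by blast
  then have "card ?B = card V - 2"
    using v_pendant(1) x_universal(1) finite_V by (simp add: card_Diff_subset)
  moreover have "card {w1, m1, w2, m2} \<le> 4"
    using card_length[of "[w1, m1, w2, m2]"] by simp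
  ultimately have "card {w1, m1, w2, m2} + 3 \<le> card ?B"
    using nine_le_card by linarith
  then obtain e1 e2 e3 where e: "e1 \<in> ?B - {w1, m1, w2, m2}" "e2 \<in> ?B - {w1, m1, w2, m2}"
    "e3 \<in> ?B - {w1, m1, w2, m2}" "distinct [e1, e2, e3]"
    by (rule obtain_three_outside) simp
  have "E m1 e2" "E m2 e3"
    using e wm by (auto intro: adj_if_not_in_non_nbhd)
  moreover have "\<not> E m1 w1" "\<not> E m2 w2"
    using wm(3,4) mem_non_nbhd_iff by blast+
  moreover have "E v x" "\<not> E v e1"
    using v_pendant(2) e(1) mem_nbhd_iff by blast+
  ultimately show ?thesis
    using e wm \<open>x \<noteq> v\<close> x_universal(1) v_pendant(1)
    by (intro has_three_resolved_pairs_by_adjacency[of x e1 e2 w1 e3 w2 v m1 m2]) auto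
qed

end

lemma pendant_or_co_degree_le_2_if_no_resolved_pairs:
  assumes no_pairs: "\<not> has_three_resolved_pairs"
    and x: "x \<in> V" "\<And>u. u \<in> V \<Longrightarrow> u \<noteq> x \<Longrightarrow> E x u" and u: "u \<in> V"
  shows "nbhd V E u = {x} \<or> card (non_nbhd u) \<le> 2"
proof -
  have large: "has_large_layer u"
    using has_three_resolved_pairs_if_no_large_layer[OF u] no_pairs by blast
  show ?thesis
  proof (cases "card (nbhd V E u) \<le> 2")
    case True
    \<comment> \<open>a low-degree vertex is pendant at a universal vertex, which can only be x\<close>
    obtain y where y: "nbhd V E u = {y}"
      using pendant_at_universal_if_low_degree[OF u large True no_pairs] by blast
    have "u \<noteq> x"
    proof
      assume "u = x"
      have "V - {x} \<subseteq> nbhd V E x"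
        using x(2) mem_nbhd_iff by blast
      then have "card (V - {x}) \<le> card (nbhd V E x)"
        by (intro card_mono finite_nbhd)
      then show False
        using True \<open>u = x\<close> x(1) finite_V nine_le_card by simp
    qed
    then have "x \<in> nbhd V E u"
      using x(2)[OF u] adj_sym mem_nbhd_iff by blast
    then show ?thesis
      using y by simp
  next
    case False
    then show ?thesis
      using card_non_nbhd_le_2_if_large_layer[OF u large] by simp
  qed
qed

lemma twin_bounded_has_three_resolved_pairs: has_three_resolved_pairs
proof (rule ccontr)
  assume no_pairs: "\<not> has_three_resolved_pairs"
  show False
  proof (cases "\<exists>v\<in>V. card (nbhd V E v) \<le> 2")
    case True
    then obtain v where v: "v \<in> V" "card (nbhd V E v) \<le> 2"
      by blast
    moreover have "has_large_layer v"
      using has_three_resolved_pairs_if_no_large_layer[OF v(1)] no_pairs by blast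
    ultimately obtain x where x: "x \<in> V" "nbhd V E v = {x}" "\<And>u. u \<in> V \<Longrightarrow> u \<noteq> x \<Longrightarrow> E x u"
      using pendant_at_universal_if_low_degree no_pairs by metis
    with no_pairs show False
      using has_three_resolved_pairs_with_pendant[OF v(1) x(2) x(1) x(3)]
        pendant_or_co_degree_le_2_if_no_resolved_pairs[OF no_pairs x(1,3)] by blast
  next
    case False
    have "card (non_nbhd u) \<le> 2" if u: "u \<in> V" for u
    proof (rule card_non_nbhd_le_2_if_large_layer[OF u])
      show "has_large_layer u"
        using has_three_resolved_pairs_if_no_large_layer[OF u] no_pairs by blast
      show "3 \<le> card (nbhd V E u)"
        using False u by auto
    qed
    with no_pairs show False
      using has_three_resolved_pairs_if_co_degree_le_2 by blast
  qed
qed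

end

theorem theorem14:
  fixes V :: "'a set" and E :: "'a \<Rightarrow> 'a \<Rightarrow> bool"
  assumes "simple_graph V E" and "connected_graph V E"
    and "card V \<ge> 9"
    and "2 * twin_number V E \<le> card V"
  shows "partition_dim V E \<le> card V - 3"
proof -
  interpret twin_bounded_graph V E
    by unfold_locales (use assms in auto)
  obtain ps where "length ps = 3" "resolved_pairs ps"
    using twin_bounded_has_three_resolved_pairs unfolding has_three_resolved_pairs_def by blast
  then show ?thesis
    using partition_dim_le_resolved_pairs by fastforce
qed

end
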